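(* Let $\lambda$ be a regular uncountable cardinal and suppose $\square(\lambda,<\omega)$ holds. Then for every stationary $S\subseteq\lambda$, $\mathrm{Refl}(2,S)$ fails; that is, there are two stationary subsets of $S$ that do not reflect simultaneously.
   Context: For a set of ordinals $A$, $\mathrm{acc}(A)$ is the set of $\beta<\sup\{\alpha+1\mid\alpha\in A\}$ with $\beta=\sup(A\cap\beta)$. A coherent sequence of length $\lambda$ and width $<\eta$ is $\mathcal{C}=\langle\mathcal{C}_\alpha\mid\alpha<\lambda\rangle$ where each $\mathcal{C}_\alpha$ is a nonempty set of fewer than $\eta$ closed unbounded subsets of $\alpha$ (for successor $\alpha=\beta+1$, $\mathcal{C}_\alpha=\{\{\beta\}\}$), such that for all $\beta<\lambda$, $C\in\mathcal{C}_\beta$ and $\alpha\in\mathrm{acc}(C)$, $C\cap\alpha\in\mathcal{C}_\alpha$. A thread is a club $D\subseteq\lambda$ with $D\cap\alpha\in\mathcal{C}_\alpha$ for all $\alpha\in\mathrm{acc}(D)$. $\square(\lambda,<\eta)$ asserts the existence of a coherent sequence of length $\lambda$ and width $<\eta$ with no thread; so $\square(\lambda,<\omega)$ concerns sequences with each $\mathcal{C}_\alpha$ finite. A stationary $S\subseteq\lambda$ reflects at $\alpha<\lambda$ if $\mathrm{cf}(\alpha)>\omega$ and $S\cap\alpha$ is stationary in $\alpha$; a collection of stationary sets reflects simultaneously if there is one $\alpha<\lambda$ at which all of them reflect. $\mathrm{Refl}(<\kappa,S)$ says every collection of fewer than $\kappa$ stationary subsets of $S$ reflects simultaneously; $\mathrm{Refl}(\kappa,S)$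 means $\mathrm{Refl}(<\kappa^+,S)$. *)

theory Defs
  imports Main "HOL-Library.Countable_Set"
begin

text \<open>The regular uncountable cardinal lambda is represented by a well-ordered type 'a:
  the ordinals below lambda are the elements of 'a, ordered by <.\<close>

definition regular_uncountable_cardinal_type :: "'a::wellorder itself \<Rightarrow> bool" where
  "regular_uncountable_cardinal_type _ \<longleftrightarrow>
     uncountable (UNIV :: 'a set)
   \<and> (\<forall>a::'a. (card_of {x. x < a}, card_of (UNIV :: 'a set)) \<in> ordLess)
   \<and> (\<forall>X::'a set. (card_of X, card_of (UNIV :: 'a set)) \<in> ordLess \<longrightarrow> (\<exists>b. \<forall>x\<in>X. x < b))"

definition is_succ_of :: "'a::wellorder \<Rightarrow> 'a \<Rightarrow> bool" where
  "is_succ_of b a \<longleftrightarrow> a < b \<and> \<not> (\<exists>g. a < g \<and> g < b)"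

text \<open>acc(A): beta < sup{alpha+1 | alpha in A} and beta = sup(A \<inter> beta).\<close>
definition acc :: "'a::wellorder set \<Rightarrow> 'a set" where
  "acc A = {b. (\<exists>a\<in>A. b \<le> a) \<and> (\<forall>g<b. \<exists>a\<in>A. g < a \<and> a < b)}"

definition club_below :: "'a::wellorder \<Rightarrow> 'a set \<Rightarrow> bool" where
  "club_below a C \<longleftrightarrow> C \<subseteq> {x. x < a}
     \<and> (\<forall>b<a. \<exists>c\<in>C. b \<le> c)
     \<and> (\<forall>b<a. (\<exists>g. g < b) \<and> (\<forall>g<b. \<exists>c\<in>C. g < c \<and> c < b) \<longrightarrow> b \<in> C)"

definition club :: "'a::wellorder set \<Rightarrow> bool" where
  "club C \<longleftrightarrow> (\<forall>b. \<exists>c\<in>C. b \<le> c)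
     \<and> (\<forall>b. (\<exists>g. g < b) \<and> (\<forall>g<b. \<exists>c\<in>C. g < c \<and> c < b) \<longrightarrow> b \<in> C)"

definition stationary :: "'a::wellorder set \<Rightarrow> bool" where
  "stationary S \<longleftrightarrow> (\<forall>C. club C \<longrightarrow> S \<inter> C \<noteq> {})"

definition stationary_below :: "'a::wellorder \<Rightarrow> 'a set \<Rightarrow> bool" where
  "stationary_below a S \<longleftrightarrow> (\<forall>C. club_below a C \<longrightarrow> S \<inter> C \<noteq> {})"

text \<open>cf(alpha) > omega: every countable subset of alpha is bounded below alpha
  (this fails for alpha = 0, for successors, and for limits of countable cofinality).\<close>
definition uncountable_cof :: "'a::wellorder \<Rightarrow> bool" where
  "uncountable_cof a \<longleftrightarrow> (\<forall>X. X \<subseteq> {x. x < a} \<and> countable X \<longrightarrow> (\<exists>g<a. \<forall>x\<in>X. x < g))"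

definition reflects_at :: "'a::wellorder set \<Rightarrow> 'a \<Rightarrow> bool" where
  "reflects_at S a \<longleftrightarrow> uncountable_cof a \<and> stationary_below a (S \<inter> {x. x < a})"

definition coherent_seq_fin :: "('a::wellorder \<Rightarrow> 'a set set) \<Rightarrow> bool" where
  "coherent_seq_fin \<C> \<longleftrightarrow>
     (\<forall>a. \<C> a \<noteq> {} \<and> finite (\<C> a) \<and> (\<forall>C\<in>\<C> a. club_below a C))
   \<and> (\<forall>a b. is_succ_of a b \<longrightarrow> \<C> a = {{b}})
   \<and> (\<forall>b. \<forall>C\<in>\<C> b. \<forall>a\<in>acc C. C \<inter> {x. x < a} \<in> \<C> a)"

definition is_thread :: "('a::wellorder \<Rightarrow> 'a set set) \<Rightarrow> 'a set \<Rightarrow> bool" where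
  "is_thread \<C> D \<longleftrightarrow> club D \<and> (\<forall>a\<in>acc D. D \<inter> {x. x < a} \<in> \<C> a)"

definition square_fin :: "'a::wellorder itself \<Rightarrow> bool" where
  "square_fin _ \<longleftrightarrow> (\<exists>\<C> :: 'a \<Rightarrow> 'a set set. coherent_seq_fin \<C> \<and> \<not> (\<exists>D. is_thread \<C> D))"

text \<open>Refl(<k, S) for a finite k: every collection of fewer than k stationary subsets of S
  reflects simultaneously.  Refl(2,S) = Refl(<3,S).\<close>
definition Refl_lt :: "nat \<Rightarrow> 'a::wellorder set \<Rightarrow> bool" where
  "Refl_lt k S \<longleftrightarrow> (\<forall>F. F \<subseteq> {T. T \<subseteq> S \<and> stationary T} \<and> finite F \<and> card F < k
      \<longrightarrow> (\<exists>a. \<forall>T\<in>F. reflects_at T a))"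

end

theory Submission
  imports Defs
begin

text \<open>Assume \<open>Refl(2, S)\<close> and let \<open>\<C>\<close> be coherent with finite levels. Since the nonstationary
  ideal is \<open>\<sigma>\<close>-complete, \<open>|\<C> \<alpha>| \<le> n\<close> on a stationary \<open>T \<subseteq> S\<close>. Call a finite set \<open>Y\<close> of subsets
  of \<open>\<delta>\<close> a trap at \<open>\<delta>\<close> if almost every \<open>\<alpha> \<in> T\<close> has a trace \<open>C \<inter> \<delta>\<close>, \<open>C \<in> \<C> \<alpha>\<close>, in \<open>Y\<close>.
  Simultaneous reflection of two subsets of \<open>T\<close> makes two ordinals share a trace, which yields
  traps of size \<open>\<le> n\<close>. The least trap size is eventually constant, there are only finitely many
  minimal traps at each \<open>\<delta>\<close>, and restriction maps them to minimal traps further down; the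
  number of those extending arbitrarily high is eventually constant, so restriction is eventually
  a bijection among them, giving a coherent branch of minimal traps through all large \<open>\<delta>\<close>. Its members
  form finitely many strands, and at almost every \<open>\<alpha> \<in> T\<close> some member of \<open>\<C> \<alpha>\<close> is an initial
  segment of a strand's union. One strand wins stationarily often, and its union is a thread.\<close>

definition critical_transversals :: "nat \<Rightarrow> 'b set set \<Rightarrow> 'b set set" where
  "critical_transversals k E =
     {Y. finite Y \<and> card Y \<le> k \<and> (\<forall>e\<in>E. e \<inter> Y \<noteq> {}) \<and> (\<forall>y\<in>Y. \<exists>e\<in>E. e \<inter> Y = {y})}"

text \<open>A critical transversal meeting \<open>e\<^sub>0 \<in> E\<close> in \<open>y\<close> is \<open>y\<close> added to a critical transversal of
  the members of \<open>E\<close> avoiding \<open>y\<close>; this gives at most \<open>|e\<^sub>0|\<close> choices per element.\<close>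

lemma critical_transversals_Suc_subset:
  assumes e0: "e0 \<in> E"
  shows "critical_transversals (Suc k) E
    \<subseteq> (\<Union>y\<in>e0. insert y ` critical_transversals k {e\<in>E. y \<notin> e})"
proof
  fix Y assume "Y \<in> critical_transversals (Suc k) E"
  then have Y: "finite Y" "card Y \<le> Suc k" "\<forall>e\<in>E. e \<inter> Y \<noteq> {}" "\<forall>y\<in>Y. \<exists>e\<in>E. e \<inter> Y = {y}"
    unfolding critical_transversals_def by auto
  then obtain y where y: "y \<in> e0" "y \<in> Y" using e0 by blast
  have "Y - {y} \<in> critical_transversals k {e\<in>E. y \<notin> e}"
    unfolding critical_transversals_def
  proof (intro CollectI conjI ballI)
    show "finite (Y - {y})" "card (Y - {y}) \<le> k" using Y y by auto
    show "e \<inter> (Y - {y}) \<noteq> {}" if "e \<in> {e\<in>E. y \<notin> e}" for e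
      using that Y by blast
    fix z assume z: "z \<in> Y - {y}"
    then obtain e where e: "e \<in> E" "e \<inter> Y = {z}" using Y by blast
    then have "y \<notin> e" using y z by auto
    then show "\<exists>e\<in>{e\<in>E. y \<notin> e}. e \<inter> (Y - {y}) = {z}" using e z by blast
  qed
  moreover have "Y = insert y (Y - {y})" using y by blast
  ultimately show "Y \<in> (\<Union>y\<in>e0. insert y ` critical_transversals k {e\<in>E. y \<notin> e})" using y by blast
qed

lemma critical_transversals_finite_card:
  assumes "\<forall>e\<in>E. finite e \<and> card e \<le> n" and "1 \<le> n"
  shows "finite (critical_transversals k E) \<and> card (critical_transversals k E) \<le> n ^ k"
  using assms(1)
proof (induction k arbitrary: E)
  case 0
  have "critical_transversals 0 E \<subseteq> {{}}" unfolding critical_transversals_def by auto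
  then show ?case using card_mono[of "{{}}"] by (auto intro: finite_subset)
next
  case (Suc k)
  show ?case
  proof (cases "E = {}")
    case True
    have "critical_transversals (Suc k) E \<subseteq> {{}}"
      unfolding critical_transversals_def using True by auto
    then have "finite (critical_transversals (Suc k) E)" "card (critical_transversals (Suc k) E) \<le> 1"
      using card_mono[of "{{}}"] by (auto intro: finite_subset)
    moreover have "1 \<le> n ^ Suc k" using assms(2) by simp
    ultimately show ?thesis by linarith
  next
    case False
    then obtain e0 where e0: "e0 \<in> E" by blast
    have fe0: "finite e0" "card e0 \<le> n" using Suc.prems e0 by auto
    let ?U = "\<Union>y\<in>e0. insert y ` critical_transversals k {e\<in>E. y \<notin> e}"
    have IH: "finite (critical_transversals k {e\<in>E. y \<notin> e})
        \<and> card (critical_transversals k {e\<in>E. y \<notin> e}) \<le> n ^ k" for y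
      using Suc.IH[of "{e\<in>E. y \<notin> e}"] Suc.prems by auto
    have fin: "finite ?U" using fe0 IH by blast
    have "card ?U \<le> (\<Sum>y\<in>e0. card (insert y ` critical_transversals k {e\<in>E. y \<notin> e}))"
      by (rule card_UN_le[OF fe0(1)])
    also have "\<dots> \<le> (\<Sum>y\<in>e0. n ^ k)"
      using IH card_image_le le_trans by (intro sum_mono) blast
    also have "\<dots> \<le> n ^ Suc k" using fe0(2) by simp
    finally have "card ?U \<le> n ^ Suc k" .
    moreover have sub: "critical_transversals (Suc k) E \<subseteq> ?U"
      using critical_transversals_Suc_subset[OF e0] .
    ultimately show ?thesis using card_mono[OF fin sub] finite_subset[OF sub fin] by linarith
  qed
qed

definition restrict_family :: "'a::order \<Rightarrow> 'a set set \<Rightarrow> 'a set set" where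
  "restrict_family \<delta> Y = (\<lambda>y. y \<inter> {x. x < \<delta>}) ` Y"

lemma restrict_family_restrict_family:
  fixes \<delta> :: "'a::order"
  shows "\<delta> \<le> \<delta>' \<Longrightarrow> restrict_family \<delta> (restrict_family \<delta>' Y) = restrict_family \<delta> Y"
  unfolding restrict_family_def image_image by (rule image_cong) (auto dest: less_le_trans)

lemma finite_cofinal_choice:
  fixes a b :: "'b::linorder"
  assumes "finite F" and "a < b" and hyp: "\<forall>\<delta>. a \<le> \<delta> \<and> \<delta> < b \<longrightarrow> (\<exists>D\<in>F. P D \<delta>)"
  shows "\<exists>D\<in>F. \<forall>\<delta>'. a \<le> \<delta>' \<and> \<delta>' < b \<longrightarrow> (\<exists>\<delta>. \<delta>' \<le> \<delta> \<and> \<delta> < b \<and> P D \<delta>)"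
proof (rule ccontr)
  assume "\<not> ?thesis"
  then obtain f where f: "\<forall>D\<in>F. a \<le> f D \<and> f D < b \<and> (\<forall>\<delta>. f D \<le> \<delta> \<and> \<delta> < b \<longrightarrow> \<not> P D \<delta>)"
    by metis
  have "F \<noteq> {}" using hyp \<open>a < b\<close> by blast
  then have "Max (f ` F) \<in> f ` F" using \<open>finite F\<close> by simp
  then have m: "a \<le> Max (f ` F)" "Max (f ` F) < b" using f by auto
  then obtain D where "D \<in> F" "P D (Max (f ` F))" using hyp by blast
  moreover have "f D \<le> Max (f ` F)" using \<open>finite F\<close> \<open>D \<in> F\<close> by simp
  ultimately show False using f m(2) by blast
qed

lemma increasing_chain:
  fixes b :: "'b::order"
  assumes "Q b" and step: "\<And>x. Q x \<Longrightarrow> \<exists>y. Q y \<and> x < y \<and> R x y"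
  shows "\<exists>s. s 0 = b \<and> (\<forall>k. Q (s k) \<and> s k < s (Suc k) \<and> R (s k) (s (Suc k)))"
proof -
  have "\<exists>s. \<forall>k. (Q (s k) \<and> (k = 0 \<longrightarrow> s k = b)) \<and> (s k < s (Suc k) \<and> R (s k) (s (Suc k)))"
    by (rule dependent_nat_choice) (use assms in auto)
  then show ?thesis by blast
qed

lemma finite_restrict_family: "finite Y \<Longrightarrow> finite (restrict_family \<delta> Y)"
  unfolding restrict_family_def by simp

lemma card_restrict_family_le: "finite Y \<Longrightarrow> card (restrict_family \<delta> Y) \<le> card Y"
  unfolding restrict_family_def by (rule card_image_le)

lemma coherent_club_below: "coherent_seq_fin \<C> \<Longrightarrow> C \<in> \<C> a \<Longrightarrow> club_below a C"
  unfolding coherent_seq_fin_def by (drule conjunct1) blast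

lemma coherent_finite: "coherent_seq_fin \<C> \<Longrightarrow> finite (\<C> a)"
  unfolding coherent_seq_fin_def by (drule conjunct1) blast

lemma coherent_nonempty: "coherent_seq_fin \<C> \<Longrightarrow> \<C> a \<noteq> {}"
  unfolding coherent_seq_fin_def by (drule conjunct1) blast

lemma coherent_restrict_acc:
  "coherent_seq_fin \<C> \<Longrightarrow> C \<in> \<C> b \<Longrightarrow> a \<in> acc C \<Longrightarrow> C \<inter> {x. x < a} \<in> \<C> a"
  unfolding coherent_seq_fin_def by (drule conjunct2, drule conjunct2) blast

lemma club_if_club_below_unbounded:
  fixes D U :: "'a::wellorder set"
  assumes U: "\<forall>b. \<exists>\<alpha>\<in>U. b < \<alpha>" and cb: "\<And>\<alpha>. \<alpha> \<in> U \<Longrightarrow> club_below \<alpha> (D \<inter> {x. x < \<alpha>})"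
  shows "club D"
proof -
  have "\<exists>c\<in>D. b \<le> c" for b
  proof -
    obtain \<alpha> where "\<alpha> \<in> U" "b < \<alpha>" using U by blast
    then show ?thesis using cb[of \<alpha>] unfolding club_below_def by blast
  qed
  moreover have "b \<in> D" if hb: "\<exists>g. g < b" "\<forall>g<b. \<exists>c\<in>D. g < c \<and> c < b" for b
  proof -
    obtain \<alpha> where a: "\<alpha> \<in> U" "b < \<alpha>" using U by blast
    have "\<forall>g<b. \<exists>c\<in>D \<inter> {x. x < \<alpha>}. g < c \<and> c < b"
    proof (intro allI impI)
      fix g assume "g < b"
      then obtain c where "c \<in> D" "g < c" "c < b" using hb(2) by blast
      moreover have "c < \<alpha>" using \<open>c < b\<close> a(2) by (rule less_trans)
      ultimately show "\<exists>c\<in>D \<inter> {x. x < \<alpha>}. g < c \<and> c < b" by blast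
    qed
    then show ?thesis using cb[OF a(1)] a(2) hb(1) unfolding club_below_def by blast
  qed
  ultimately show ?thesis unfolding club_def by blast
qed

lemma is_thread_if_coherent_on_unbounded:
  fixes \<C> :: "'a::wellorder \<Rightarrow> 'a set set"
  assumes coh: "coherent_seq_fin \<C>" and U: "\<forall>b. \<exists>\<alpha>\<in>U. b < \<alpha>"
    and D: "\<forall>\<alpha>\<in>U. D \<inter> {x. x < \<alpha>} \<in> \<C> \<alpha>"
  shows "is_thread \<C> D"
proof -
  have "club D" using U D coherent_club_below[OF coh] by (intro club_if_club_below_unbounded) blast+
  moreover have "D \<inter> {x. x < a} \<in> \<C> a" if aD: "a \<in> acc D" for a
  proof -
    obtain c where c: "c \<in> D" "a \<le> c" using aD unfolding acc_def by blast
    obtain \<alpha> where al: "\<alpha> \<in> U" "c < \<alpha>" using U by blast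
    let ?E = "D \<inter> {x. x < \<alpha>}"
    have "a \<in> acc ?E" unfolding acc_def
    proof (intro CollectI conjI allI impI)
      show "\<exists>e\<in>?E. a \<le> e" using c al by blast
      fix g assume "g < a"
      then obtain e where "e \<in> D" "g < e" "e < a" using aD unfolding acc_def by blast
      moreover have "e < \<alpha>" using \<open>e < a\<close> c(2) al(2) by (meson less_le_trans less_trans)
      ultimately show "\<exists>e\<in>?E. g < e \<and> e < a" by blast
    qed
    then have "?E \<inter> {x. x < a} \<in> \<C> a" using coherent_restrict_acc[OF coh] D al(1) by blast
    moreover have "?E \<inter> {x. x < a} = D \<inter> {x. x < a}"
      using le_less_trans[OF c(2) al(2)] by (auto dest: less_trans)
    ultimately show ?thesis by simp
  qed
  ultimately show ?thesis unfolding is_thread_def by blast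
qed

section \<open>Clubs and stationary sets\<close>

context
  assumes regular: "regular_uncountable_cardinal_type TYPE('a::wellorder)"
begin

lemma bounded_if_small:
  "(card_of (X::'a set), card_of (UNIV :: 'a set)) \<in> ordLess \<Longrightarrow> \<exists>b. \<forall>x\<in>X. x < b"
  using regular unfolding regular_uncountable_cardinal_type_def by blast

lemma countable_bounded:
  assumes "countable (X::'a set)"
  shows "\<exists>b. \<forall>x\<in>X. x < b"
proof -
  have X: "(card_of X, card_of (UNIV::nat set)) \<in> ordLeq"
    using assms unfolding countable_def card_of_ordLeq[symmetric] by blast
  have "uncountable (UNIV::'a set)"
    using regular unfolding regular_uncountable_cardinal_type_def by (rule conjunct1)
  then have "(card_of (UNIV::'a set), card_of (UNIV::nat set)) \<notin> ordLeq"
    unfolding countable_def card_of_ordLeq[symmetric] by blast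
  then have "(card_of (UNIV::nat set), card_of (UNIV::'a set)) \<in> ordLess"
    using not_ordLeq_iff_ordLess[OF card_of_Well_order card_of_Well_order] by blast
  then show ?thesis using bounded_if_small ordLeq_ordLess_trans[OF X] by blast
qed

lemma exists_greater: "\<exists>b. (a::'a) < b"
  using countable_bounded[of "{a}"] by blast

lemma image_lessThan_bounded: "\<exists>b. \<forall>\<xi><a. f (\<xi>::'a) < (b::'a)"
proof -
  have "(card_of (f ` {x. x < a}), card_of {x::'a. x < a}) \<in> ordLeq" by (rule card_of_image)
  moreover have "(card_of {x::'a. x < a}, card_of (UNIV :: 'a set)) \<in> ordLess"
    using regular unfolding regular_uncountable_cardinal_type_def by blast
  ultimately obtain b where "\<forall>x\<in>f ` {x. x < a}. x < b"
    using bounded_if_small ordLeq_ordLess_trans by blast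
  then show ?thesis by blast
qed

lemma increasing_seq_sup:
  fixes s :: "nat \<Rightarrow> 'a"
  assumes inc: "\<And>k. s k < s (Suc k)"
  shows "\<exists>L. (\<forall>k. s k < L) \<and> (\<forall>g<L. \<exists>k. g < s k) \<and> (\<forall>u. (\<forall>k. s k < u) \<longrightarrow> L \<le> u)"
proof -
  obtain b where b: "\<forall>x\<in>range s. x < b" using countable_bounded[of "range s"] by auto
  define L where "L = (LEAST u. \<forall>k. s k < u)"
  have upper: "\<forall>k. s k < L" unfolding L_def by (rule LeastI[of _ b]) (use b in auto)
  have least: "\<forall>u. (\<forall>k. s k < u) \<longrightarrow> L \<le> u" unfolding L_def by (auto intro: Least_le)
  have "\<forall>g<L. \<exists>k. g < s k"
  proof (intro allI impI)
    fix g assume "g < L"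
    then have "\<not> (\<forall>k. s k < g)" using least by (auto simp: not_le[symmetric])
    then obtain k where "g \<le> s k" by (auto simp: not_less)
    then show "\<exists>k. g < s k" using inc[of k] by (meson order.strict_trans1)
  qed
  then show ?thesis using upper least by blast
qed

lemma club_unbounded: "club C \<Longrightarrow> \<exists>c\<in>C. b \<le> c"
  unfolding club_def by blast

lemma club_closed: "club C \<Longrightarrow> g0 < b \<Longrightarrow> \<forall>g<b. \<exists>c\<in>C. g < c \<and> c < b \<Longrightarrow> b \<in> C"
  unfolding club_def by blast

lemma club_UNIV: "club (UNIV::'a set)"
  unfolding club_def by auto

text \<open>Build \<open>s\<^sub>0 < s\<^sub>1 < \<dots>\<close> such that \<open>[s\<^sub>k, s\<^sub>k\<^sub>+\<^sub>1)\<close> meets every \<open>E \<xi>\<close> with \<open>\<xi> < s\<^sub>k\<close>;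
  the supremum of the \<open>s\<^sub>k\<close> is then a limit point of each such \<open>E \<xi>\<close>.\<close>

lemma diagonal_Inter_unbounded:
  fixes E :: "'a \<Rightarrow> 'a set"
  assumes cl: "\<And>\<xi>. club (E \<xi>)"
  shows "\<exists>c\<in>{\<beta>. \<forall>\<xi><\<beta>. \<beta> \<in> E \<xi>}. b \<le> c"
proof -
  have step: "\<exists>y. x < y \<and> (\<forall>\<xi><x. \<exists>c\<in>E \<xi>. x \<le> c \<and> c < y)" for x
  proof -
    define f where "f \<xi> = (SOME c. c \<in> E \<xi> \<and> x \<le> c)" for \<xi>
    have f: "f \<xi> \<in> E \<xi> \<and> x \<le> f \<xi>" for \<xi>
      unfolding f_def by (rule someI_ex) (use club_unbounded[OF cl] in blast)
    obtain y0 where y0: "\<forall>\<xi><x. f \<xi> < y0" using image_lessThan_bounded by blast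
    obtain y1 where y1: "x < y1" using exists_greater by blast
    have "x < max y0 y1" "\<forall>\<xi><x. f \<xi> < max y0 y1" using y0 y1 by (auto simp: less_max_iff_disj)
    then show ?thesis using f by blast
  qed
  obtain s where s0: "s 0 = b" and inc: "\<And>k. s k < s (Suc k)"
    and meets: "\<And>k. \<forall>\<xi><s k. \<exists>c\<in>E \<xi>. s k \<le> c \<and> c < s (Suc k)"
    using increasing_chain[of "\<lambda>_. True" b "\<lambda>x y. \<forall>\<xi><x. \<exists>c\<in>E \<xi>. x \<le> c \<and> c < y"] step
    by blast
  obtain L where above: "\<forall>k. s k < L" and below: "\<forall>g<L. \<exists>k. g < s k"
    using increasing_seq_sup[of s, OF inc] by blast
  have "L \<in> E \<xi>" if "\<xi> < L" for \<xi>
  proof (rule club_closed[OF cl, of "s 0"])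
    show "s 0 < L" using above by blast
    obtain k where k: "\<xi> < s k" using below \<open>\<xi> < L\<close> by blast
    show "\<forall>g<L. \<exists>c\<in>E \<xi>. g < c \<and> c < L"
    proof (intro allI impI)
      fix g assume "g < L"
      then obtain j where j: "g < s j" using below by blast
      let ?i = "max j k"
      have "mono s" using inc by (simp add: mono_iff_le_Suc less_imp_le)
      then have "s j \<le> s ?i" "s k \<le> s ?i" by (simp_all add: monoD)
      then have "\<xi> < s ?i" "g < s ?i" using k j by auto
      then obtain c where c: "c \<in> E \<xi>" "s ?i \<le> c" "c < s (Suc ?i)" using meets by blast
      have "g < c" using \<open>g < s ?i\<close> c(2) by (rule less_le_trans)
      moreover have "c < L" using c(3) above by (blast intro: less_trans)
      ultimately show "\<exists>c\<in>E \<xi>. g < c \<and> c < L" using c(1) by blast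
    qed
  qed
  moreover have "b \<le> L" using above s0 by (metis less_imp_le)
  ultimately show ?thesis by blast
qed

lemma club_diagonal_Inter:
  fixes E :: "'a \<Rightarrow> 'a set"
  assumes cl: "\<And>\<xi>. club (E \<xi>)"
  shows "club {\<beta>. \<forall>\<xi><\<beta>. \<beta> \<in> E \<xi>}"
proof -
  let ?D = "{\<beta>. \<forall>\<xi><\<beta>. \<beta> \<in> E \<xi>}"
  have "b \<in> ?D" if g0: "g0 < b" and approx: "\<forall>g<b. \<exists>c\<in>?D. g < c \<and> c < b" for g0 b
  proof (intro CollectI allI impI)
    fix \<xi> assume "\<xi> < b"
    have "\<forall>g<b. \<exists>c\<in>E \<xi>. g < c \<and> c < b"
    proof (intro allI impI)
      fix g assume "g < b"
      then have "max g \<xi> < b" using \<open>\<xi> < b\<close> by simp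
      then obtain c where "c \<in> ?D" "max g \<xi> < c" "c < b" using approx by blast
      then show "\<exists>c\<in>E \<xi>. g < c \<and> c < b" by auto
    qed
    then show "b \<in> E \<xi>" using club_closed[OF cl g0] by blast
  qed
  then show ?thesis unfolding club_def using diagonal_Inter_unbounded[of E] cl by blast
qed

lemma club_Int:
  fixes A B :: "'a set"
  assumes "club A" "club B"
  shows "club (A \<inter> B)"
proof -
  obtain x0 x1 :: 'a where "x0 < x1" using exists_greater by blast
  define E where "E \<xi> = (if \<xi> = x0 then A else B)" for \<xi>
  have "club (E \<xi>)" for \<xi> using assms unfolding E_def by simp
  then have D: "club {\<beta>. \<forall>\<xi><\<beta>. \<beta> \<in> E \<xi>}" by (rule club_diagonal_Inter)
  have "\<exists>c\<in>A \<inter> B. b \<le> c" for b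
  proof -
    obtain y where "x1 < y" using exists_greater by blast
    obtain c where c: "\<forall>\<xi><c. c \<in> E \<xi>" "max b y \<le> c" using club_unbounded[OF D] by blast
    then have "x0 < c" "x1 < c" using \<open>x0 < x1\<close> \<open>x1 < y\<close> by auto
    then have "c \<in> E x0" "c \<in> E x1" using c(1) by blast+
    then have "c \<in> A" "c \<in> B" using \<open>x0 < x1\<close> unfolding E_def by (auto split: if_splits)
    then show ?thesis using c(2) by auto
  qed
  moreover have "\<forall>b. (\<exists>g. g < b) \<and> (\<forall>g<b. \<exists>c\<in>A \<inter> B. g < c \<and> c < b) \<longrightarrow> b \<in> A \<inter> B"
    using assms unfolding club_def by (meson IntD1 IntD2 IntI)
  ultimately show ?thesis unfolding club_def by blast
qed

lemma club_INT_nat: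
  fixes E :: "nat \<Rightarrow> 'a set"
  assumes cl: "\<And>k. club (E k)"
  shows "club (\<Inter>k. E k)"
proof -
  have "uncountable (UNIV::'a set)"
    using regular unfolding regular_uncountable_cardinal_type_def by (rule conjunct1)
  then have "infinite (UNIV::'a set)" using countable_finite by blast
  then obtain e :: "nat \<Rightarrow> 'a" where e: "inj e" using infinite_countable_subset by blast
  define E' where "E' \<xi> = (if \<xi> \<in> range e then E (inv e \<xi>) else UNIV)" for \<xi>
  have "club (E' \<xi>)" for \<xi> using cl club_UNIV unfolding E'_def by simp
  then have D: "club {\<beta>. \<forall>\<xi><\<beta>. \<beta> \<in> E' \<xi>}" by (rule club_diagonal_Inter)
  obtain b0 where b0: "\<forall>x\<in>range e. x < b0" using countable_bounded[of "range e"] by auto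
  have "\<exists>c\<in>(\<Inter>k. E k). b \<le> c" for b
  proof -
    obtain c where c: "\<forall>\<xi><c. c \<in> E' \<xi>" "max b b0 \<le> c" using club_unbounded[OF D] by blast
    have "c \<in> E k" for k
    proof -
      have "e k < c" using b0 c(2) by (meson max.bounded_iff order.strict_trans2 rangeI)
      then have "c \<in> E' (e k)" using c(1) by blast
      then show ?thesis unfolding E'_def using e by simp
    qed
    then show ?thesis using c by auto
  qed
  moreover have "\<forall>b. (\<exists>g. g < b) \<and> (\<forall>g<b. \<exists>c\<in>(\<Inter>k. E k). g < c \<and> c < b) \<longrightarrow> b \<in> (\<Inter>k. E k)"
  proof (intro allI impI)
    fix b assume H: "(\<exists>g. g < b) \<and> (\<forall>g<b. \<exists>c\<in>(\<Inter>k. E k). g < c \<and> c < b)"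
    show "b \<in> (\<Inter>k. E k)"
    proof
      fix k
      have "\<forall>g<b. \<exists>c\<in>E k. g < c \<and> c < b" using H by blast
      then show "b \<in> E k" using H cl[of k] unfolding club_def by blast
    qed
  qed
  ultimately show ?thesis unfolding club_def by blast
qed

lemma club_greaterThan: "club {\<alpha>::'a. b < \<alpha>}"
proof -
  have "\<exists>c\<in>{\<alpha>. b < \<alpha>}. x \<le> c" for x
  proof -
    obtain y where "max x b < y" using exists_greater by blast
    then show ?thesis by (intro bexI[of _ y]) auto
  qed
  moreover have "x \<in> {\<alpha>. b < \<alpha>}" if x: "g < x" "\<forall>g<x. \<exists>c\<in>{\<alpha>. b < \<alpha>}. g < c \<and> c < x" for g x
  proof -
    obtain c where "b < c" "c < x" using x by blast
    then show ?thesis by simp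
  qed
  ultimately show ?thesis unfolding club_def by blast
qed

definition limit_points :: "'a set" where
  "limit_points = {\<beta>. (\<exists>g. g < \<beta>) \<and> (\<forall>g<\<beta>. \<exists>e. g < e \<and> e < \<beta>)}"

lemma club_limit_points: "club limit_points"
proof -
  have "\<exists>c\<in>limit_points. b \<le> c" for b
  proof -
    obtain s where s0: "s 0 = b" and inc: "\<And>k. s k < s (Suc k)"
      using increasing_chain[of "\<lambda>_. True" b "\<lambda>_ _. True"] exists_greater by blast
    obtain L where above: "\<forall>k. s k < L" and below: "\<forall>g<L. \<exists>k. g < s k"
      using increasing_seq_sup[of s, OF inc] by blast
    have "L \<in> limit_points" unfolding limit_points_def
    proof (intro CollectI conjI allI impI)
      show "\<exists>g. g < L" using above by blast
      fix g assume "g < L"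
      then obtain k where "g < s k" using below by blast
      then show "\<exists>e>g. e < L" using above by blast
    qed
    moreover have "b \<le> L" using above s0 by (metis less_imp_le)
    ultimately show ?thesis by blast
  qed
  moreover have "x \<in> limit_points" if "\<exists>g. g < x" "\<forall>g<x. \<exists>c\<in>limit_points. g < c \<and> c < x" for x
    using that unfolding limit_points_def by blast
  ultimately show ?thesis unfolding club_def by blast
qed

lemma nonstationary_iff: "\<not> stationary N \<longleftrightarrow> (\<exists>C. club C \<and> N \<inter> C = {})"
  unfolding stationary_def by blast

lemma nonstationary_subset: "\<not> stationary N \<Longrightarrow> M \<subseteq> N \<Longrightarrow> \<not> stationary M"
  unfolding stationary_def by blast

lemma stationary_mono: "stationary M \<Longrightarrow> M \<subseteq> N \<Longrightarrow> stationary N"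
  unfolding stationary_def by blast

lemma stationary_nonempty: "stationary (T::'a set) \<Longrightarrow> T \<noteq> {}"
  unfolding stationary_def using club_UNIV by blast

lemma nonstationary_Un:
  fixes A B :: "'a set"
  assumes "\<not> stationary A" "\<not> stationary B"
  shows "\<not> stationary (A \<union> B)"
proof -
  obtain C1 C2 where "club C1" "A \<inter> C1 = {}" "club C2" "B \<inter> C2 = {}"
    using assms nonstationary_iff by metis
  then have "club (C1 \<inter> C2)" "(A \<union> B) \<inter> (C1 \<inter> C2) = {}" using club_Int by auto
  then show ?thesis using nonstationary_iff by blast
qed

lemma nonstationary_finite_UN:
  fixes A :: "'i \<Rightarrow> 'a set"
  assumes "finite I" "\<forall>i\<in>I. \<not> stationary (A i)"
  shows "\<not> stationary (\<Union>i\<in>I. A i)"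
  using assms
proof (induction I rule: finite_induct)
  case empty
  then show ?case using stationary_nonempty by auto
next
  case (insert x F)
  then show ?case using nonstationary_Un by simp
qed

lemma nonstationary_countable_UN:
  fixes A :: "nat \<Rightarrow> 'a set"
  assumes "\<forall>k. \<not> stationary (A k)"
  shows "\<not> stationary (\<Union>k. A k)"
proof -
  have "\<forall>k. \<exists>C. club C \<and> A k \<inter> C = {}" using assms nonstationary_iff by blast
  then obtain C where C: "\<forall>k. club (C k) \<and> A k \<inter> C k = {}" by metis
  then have "club (\<Inter>k. C k)" using club_INT_nat by blast
  moreover have "(\<Union>k. A k) \<inter> (\<Inter>k. C k) = {}" using C by blast
  ultimately show ?thesis using nonstationary_iff by blast
qed

lemma nonstationary_diagonal_Union:
  fixes N :: "'a \<Rightarrow> 'a set"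
  assumes "\<forall>\<delta>. \<not> stationary (N \<delta>)"
  shows "\<not> stationary {\<alpha>. \<exists>\<delta><\<alpha>. \<alpha> \<in> N \<delta>}"
proof -
  have "\<forall>\<delta>. \<exists>C. club C \<and> N \<delta> \<inter> C = {}" using assms nonstationary_iff by blast
  then obtain C where C: "\<forall>\<delta>. club (C \<delta>) \<and> N \<delta> \<inter> C \<delta> = {}" by metis
  then have "club {\<beta>. \<forall>\<xi><\<beta>. \<beta> \<in> C \<xi>}" using club_diagonal_Inter by blast
  moreover have "{\<alpha>. \<exists>\<delta><\<alpha>. \<alpha> \<in> N \<delta>} \<inter> {\<beta>. \<forall>\<xi><\<beta>. \<beta> \<in> C \<xi>} = {}" using C by blast
  ultimately show ?thesis using nonstationary_iff by blast
qed

lemma nonstationary_atMost: "\<not> stationary {\<alpha>::'a. \<alpha> \<le> b}"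
proof -
  have "{\<alpha>::'a. \<alpha> \<le> b} \<inter> {\<alpha>. b < \<alpha>} = {}" by auto
  then show ?thesis using club_greaterThan nonstationary_iff by blast
qed

lemma stationary_Diff:
  fixes T N :: "'a set"
  assumes "stationary T" "\<not> stationary N"
  shows "stationary (T - N)"
proof (rule ccontr)
  assume "\<not> stationary (T - N)"
  then have "\<not> stationary ((T - N) \<union> N)" using nonstationary_Un assms(2) by blast
  then show False using assms(1) nonstationary_subset[of "(T - N) \<union> N" T] by blast
qed

lemma stationary_greaterThan:
  assumes "stationary T"
  shows "stationary {\<alpha>\<in>T. b < (\<alpha>::'a)}"
proof -
  have "T - {\<alpha>. \<alpha> \<le> b} = {\<alpha>\<in>T. b < \<alpha>}" by auto
  then show ?thesis using stationary_Diff[OF assms nonstationary_atMost, of b] by simp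
qed

lemma stationary_unbounded: "stationary T \<Longrightarrow> \<exists>\<alpha>\<in>T. b < (\<alpha>::'a)"
  using stationary_greaterThan stationary_nonempty by blast

lemma stationary_Int_club:
  assumes "stationary (A::'a set)" "club C"
  shows "stationary (A \<inter> C)"
  unfolding stationary_def
proof (intro allI impI)
  fix C' :: "'a set"
  assume "club C'"
  then have "A \<inter> (C \<inter> C') \<noteq> {}" using assms club_Int unfolding stationary_def by blast
  then show "A \<inter> C \<inter> C' \<noteq> {}" by blast
qed

lemma increasing_seq_sup_below:
  fixes s :: "nat \<Rightarrow> 'a"
  assumes inc: "\<And>k. s k < s (Suc k)" and uc: "uncountable_cof \<gamma>" and bd: "\<And>k. s k < \<gamma>"
  shows "\<exists>L. (\<forall>k. s k < L) \<and> (\<forall>g<L. \<exists>k. g < s k) \<and> L < \<gamma>"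
proof -
  obtain L where L: "\<forall>k. s k < L" "\<forall>g<L. \<exists>k. g < s k" "\<forall>u. (\<forall>k. s k < u) \<longrightarrow> L \<le> u"
    using increasing_seq_sup[of s, OF inc] by blast
  have "range s \<subseteq> {x. x < \<gamma>} \<and> countable (range s)" using bd by auto
  then obtain g where "g < \<gamma>" "\<forall>x\<in>range s. x < g" using uc unfolding uncountable_cof_def by blast
  then have "L < \<gamma>" using L(3) by (meson order.strict_trans1 rangeI)
  then show ?thesis using L by blast
qed

lemma exists_between_below: "uncountable_cof \<gamma> \<Longrightarrow> x < \<gamma> \<Longrightarrow> \<exists>g. x < g \<and> g < (\<gamma>::'a)"
  unfolding uncountable_cof_def by (drule spec[of _ "{x}"]) auto

lemma acc_unbounded_below:
  fixes C :: "'a set"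
  assumes uc: "uncountable_cof \<gamma>" and cb: "club_below \<gamma> C" and "b < \<gamma>"
  shows "\<exists>L\<in>acc C. b < L \<and> L < \<gamma>"
proof -
  have Csub: "C \<subseteq> {x. x < \<gamma>}" and Cunb: "\<forall>b<\<gamma>. \<exists>c\<in>C. b \<le> c"
    using cb unfolding club_below_def by blast+
  obtain c0 where c0: "c0 \<in> C" "b \<le> c0" using Cunb \<open>b < \<gamma>\<close> by blast
  have step: "\<exists>y. y \<in> C \<and> x < y \<and> True" if x: "x \<in> C" for x
  proof -
    obtain g where "x < g" "g < \<gamma>" using exists_between_below[OF uc] x Csub by blast
    then obtain y where "y \<in> C" "g \<le> y" using Cunb by blast
    then show ?thesis using less_le_trans[OF \<open>x < g\<close>] by blast
  qed
  obtain s where s0: "s 0 = c0" and sS: "\<forall>k. s k \<in> C \<and> s k < s (Suc k)"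
    using increasing_chain[of "\<lambda>y. y \<in> C" c0 "\<lambda>_ _. True"] step c0(1) by blast
  have inc: "\<And>k. s k < s (Suc k)" and bd: "\<And>k. s k < \<gamma>" using sS Csub by blast+
  obtain L where L1: "\<forall>k. s k < L" and L2: "\<forall>g<L. \<exists>k. g < s k" and L3: "L < \<gamma>"
    using increasing_seq_sup_below[of s, OF inc uc bd] by blast
  have "L \<in> acc C" unfolding acc_def
  proof (intro CollectI conjI allI impI)
    show "\<exists>a\<in>C. L \<le> a" using Cunb L3 by blast
    fix g assume "g < L"
    then obtain k where "g < s k" using L2 by blast
    then have "g < s (Suc k)" using inc[of k] by (rule less_trans)
    then show "\<exists>a\<in>C. g < a \<and> a < L" using sS L1 by blast
  qed
  moreover have "b < L" using L1 s0 c0(2) by (metis le_less_trans)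
  ultimately show ?thesis using L3 by blast
qed

lemma club_below_acc:
  fixes C :: "'a set"
  assumes uc: "uncountable_cof \<gamma>" and cb: "club_below \<gamma> C" and xi: "\<xi> < \<gamma>"
  shows "club_below \<gamma> {a\<in>acc C. \<xi> < a \<and> a < \<gamma>}"
proof -
  let ?A = "{a\<in>acc C. \<xi> < a \<and> a < \<gamma>}"
  have Cunb: "\<forall>b<\<gamma>. \<exists>c\<in>C. b \<le> c" using cb unfolding club_below_def by blast
  have unb: "\<exists>c\<in>?A. b \<le> c" if "b < \<gamma>" for b
  proof -
    have "max b \<xi> < \<gamma>" using that xi by simp
    then obtain L where "L \<in> acc C" "max b \<xi> < L" "L < \<gamma>"
      using acc_unbounded_below[OF uc cb] by blast
    then show ?thesis by (auto intro: less_imp_le)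
  qed
  have clo: "b \<in> ?A" if hb: "b < \<gamma>" "\<exists>g. g < b" "\<forall>g<b. \<exists>c\<in>?A. g < c \<and> c < b" for b
  proof -
    have "b \<in> acc C" unfolding acc_def
    proof (intro CollectI conjI allI impI)
      show "\<exists>a\<in>C. b \<le> a" using Cunb hb(1) by blast
      fix g assume "g < b"
      then obtain c where c: "c \<in> acc C" "g < c" "c < b" using hb(3) by blast
      then obtain a where "a \<in> C" "g < a" "a < c" unfolding acc_def by blast
      then show "\<exists>a\<in>C. g < a \<and> a < b" using c(3) by (meson less_trans)
    qed
    moreover obtain g0 where "g0 < b" using hb(2) by blast
    then obtain c where "c \<in> ?A" "g0 < c" "c < b" using hb(3) by blast
    then have "\<xi> < b" by auto
    ultimately show ?thesis using hb(1) by blast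
  qed
  show ?thesis unfolding club_below_def using unb clo by blast
qed

text \<open>Members of \<open>\<C> \<gamma>\<close> restrict coherently to every point of their accumulation set, which
  is club below \<open>\<gamma>\<close>; so it meets both sets reflecting at \<open>\<gamma>\<close>, in increasing order.\<close>

lemma coherent_reflection_pair:
  fixes \<C> :: "'a \<Rightarrow> 'a set set"
  assumes coh: "coherent_seq_fin \<C>" and r0: "reflects_at T0 \<gamma>" and r1: "reflects_at T1 \<gamma>"
    and C: "C \<in> \<C> \<gamma>"
  shows "\<exists>\<alpha>0\<in>T0. \<exists>\<alpha>1\<in>T1. \<alpha>0 < \<alpha>1 \<and> C \<inter> {x. x < \<alpha>0} \<in> \<C> \<alpha>0 \<and> C \<inter> {x. x < \<alpha>1} \<in> \<C> \<alpha>1"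
proof -
  have uc: "uncountable_cof \<gamma>" and st0: "stationary_below \<gamma> (T0 \<inter> {x. x < \<gamma>})"
    and st1: "stationary_below \<gamma> (T1 \<inter> {x. x < \<gamma>})"
    using r0 r1 unfolding reflects_at_def by blast+
  have cb: "club_below \<gamma> C" using coherent_club_below[OF coh C] .
  obtain g0 where "g0 < \<gamma>" using uc unfolding uncountable_cof_def by blast
  then have "club_below \<gamma> {a\<in>acc C. g0 < a \<and> a < \<gamma>}" using club_below_acc[OF uc cb] by blast
  then obtain \<alpha>0 where a0: "\<alpha>0 \<in> T0" "\<alpha>0 \<in> acc C" "\<alpha>0 < \<gamma>"
    using st0 unfolding stationary_below_def by blast
  then have "club_below \<gamma> {a\<in>acc C. \<alpha>0 < a \<and> a < \<gamma>}" using club_below_acc[OF uc cb] by blast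
  then obtain \<alpha>1 where a1: "\<alpha>1 \<in> T1" "\<alpha>1 \<in> acc C" "\<alpha>0 < \<alpha>1"
    using st1 unfolding stationary_below_def by blast
  show ?thesis using a0 a1 coherent_restrict_acc[OF coh C] by blast
qed

section \<open>Traces and traps\<close>

context
  fixes \<C> :: "'a \<Rightarrow> 'a set set" and S T :: "'a set" and n :: nat
  assumes coh: "coherent_seq_fin \<C>" and refl: "Refl_lt 3 S" and TS: "T \<subseteq> S"
    and Tst: "stationary T" and Tn: "\<forall>\<alpha>\<in>T. card (\<C> \<alpha>) \<le> n"
begin

definition traces :: "'a \<Rightarrow> 'a \<Rightarrow> 'a set set" where
  "traces \<delta> \<alpha> = (\<lambda>D. D \<inter> {x. x < \<delta>}) ` \<C> \<alpha>"

definition traps :: "'a \<Rightarrow> 'a set set \<Rightarrow> bool" where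
  "traps \<delta> Y \<longleftrightarrow> \<not> stationary {\<alpha>\<in>T. \<delta> < \<alpha> \<and> traces \<delta> \<alpha> \<inter> Y = {}}"

definition popular_traces :: "'a \<Rightarrow> 'a set \<Rightarrow> 'a set set" where
  "popular_traces \<delta> T1 = {x. stationary {\<beta>\<in>T1. x \<in> traces \<delta> \<beta>}}"

definition min_trap_card :: "'a \<Rightarrow> nat" where
  "min_trap_card \<delta> = (LEAST k. \<exists>Y. finite Y \<and> card Y = k \<and> traps \<delta> Y)"

lemma finite_traces: "finite (traces \<delta> \<alpha>)"
  unfolding traces_def using coherent_finite[OF coh] by blast

lemma card_traces_le: "\<alpha> \<in> T \<Longrightarrow> card (traces \<delta> \<alpha>) \<le> n"
  unfolding traces_def using Tn card_image_le[OF coherent_finite[OF coh]] le_trans by blast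

lemma trace_bound_pos: "1 \<le> n"
proof -
  obtain \<alpha> where "\<alpha> \<in> T" using stationary_nonempty[OF Tst] by blast
  then have "0 < card (\<C> \<alpha>)" "card (\<C> \<alpha>) \<le> n"
    using Tn coherent_finite[OF coh] coherent_nonempty[OF coh] card_gt_0_iff by blast+
  then show ?thesis by linarith
qed

lemma restrict_mem_traces:
  assumes "D \<inter> {x. x < \<alpha>} \<in> \<C> \<alpha>" "\<delta> \<le> \<alpha>"
  shows "D \<inter> {x. x < \<delta>} \<in> traces \<delta> \<alpha>"
proof -
  have "D \<inter> {x. x < \<delta>} = (D \<inter> {x. x < \<alpha>}) \<inter> {x. x < \<delta>}" using assms(2) by (auto dest: less_le_trans)
  then show ?thesis unfolding traces_def using assms(1) by blast
qed

lemma traces_restrict: "\<delta> \<le> \<delta>' \<Longrightarrow> y \<in> traces \<delta>' \<alpha> \<Longrightarrow> y \<inter> {x. x < \<delta>} \<in> traces \<delta> \<alpha>"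
  unfolding traces_def by (auto dest: less_le_trans)

text \<open>This is the only use of \<open>Refl(2, S)\<close>: at a common reflection point \<open>\<gamma>\<close>, any
  \<open>C \<in> \<C> \<gamma>\<close> yields \<open>\<alpha>\<^sub>0 < \<alpha>\<^sub>1\<close> from the two sets sharing the trace \<open>C \<inter> \<delta>\<close>.\<close>

lemma no_trace_disjoint_pair:
  assumes T0: "T0 \<subseteq> S" "stationary T0" "T0 \<subseteq> {\<alpha>. \<delta> < \<alpha>}" and T1: "T1 \<subseteq> S" "stationary T1"
  shows "\<exists>\<alpha>\<in>T0. \<exists>\<beta>\<in>T1. \<alpha> < \<beta> \<and> traces \<delta> \<alpha> \<inter> traces \<delta> \<beta> \<noteq> {}"
proof -
  have "{T0, T1} \<subseteq> {T. T \<subseteq> S \<and> stationary T}" "card {T0, T1} < 3"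
    using T0 T1 by (auto simp: card_insert_if)
  then obtain \<gamma> where "reflects_at T0 \<gamma>" "reflects_at T1 \<gamma>"
    using refl unfolding Refl_lt_def by (metis finite.emptyI finite_insert insertCI)
  moreover obtain C where C: "C \<in> \<C> \<gamma>" using coherent_nonempty[OF coh] by blast
  ultimately obtain \<alpha>0 \<alpha>1 where a: "\<alpha>0 \<in> T0" "\<alpha>1 \<in> T1" "\<alpha>0 < \<alpha>1"
    "C \<inter> {x. x < \<alpha>0} \<in> \<C> \<alpha>0" "C \<inter> {x. x < \<alpha>1} \<in> \<C> \<alpha>1"
    using coherent_reflection_pair[OF coh] by blast
  have "\<delta> \<le> \<alpha>0" "\<delta> \<le> \<alpha>1" using T0(3) a(1,3) by (auto simp: less_imp_le)
  then have "C \<inter> {x. x < \<delta>} \<in> traces \<delta> \<alpha>0 \<inter> traces \<delta> \<alpha>1"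
    using restrict_mem_traces a(4,5) by blast
  then show ?thesis using a(1-3) by blast
qed

text \<open>Otherwise remove from \<open>T\<^sub>1\<close> the diagonal union over \<open>\<alpha> \<in> T\<^sub>0\<close> of the nonstationary sets
  \<open>{\<beta> \<in> T\<^sub>1. x \<in> traces \<delta> \<beta>}\<close>, \<open>x \<in> traces \<delta> \<alpha>\<close>, contradicting the previous lemma.\<close>

lemma exists_popular_trace:
  assumes T0: "T0 \<subseteq> T" "stationary T0" and T1: "T1 \<subseteq> T" "stationary T1"
  shows "\<exists>\<alpha>\<in>T0. \<delta> < \<alpha> \<and> traces \<delta> \<alpha> \<inter> popular_traces \<delta> T1 \<noteq> {}"
proof (rule ccontr)
  assume "\<not> ?thesis"
  then have H: "\<forall>\<alpha>\<in>T0. \<delta> < \<alpha> \<longrightarrow> (\<forall>x\<in>traces \<delta> \<alpha>. \<not> stationary {\<beta>\<in>T1. x \<in> traces \<delta> \<beta>})"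
    unfolding popular_traces_def by blast
  define Z where "Z \<alpha> = (if \<alpha> \<in> T0 \<and> \<delta> < \<alpha> then (\<Union>x\<in>traces \<delta> \<alpha>. {\<beta>\<in>T1. x \<in> traces \<delta> \<beta>}) else {})"
    for \<alpha>
  have "\<not> stationary (Z \<alpha>)" for \<alpha>
  proof (cases "\<alpha> \<in> T0 \<and> \<delta> < \<alpha>")
    case True
    have "\<not> stationary (\<Union>x\<in>traces \<delta> \<alpha>. {\<beta>\<in>T1. x \<in> traces \<delta> \<beta>})"
      using H True by (intro nonstationary_finite_UN[OF finite_traces]) blast
    then show ?thesis using True unfolding Z_def by simp
  next
    case False
    then show ?thesis using stationary_nonempty unfolding Z_def by auto
  qed
  then have "stationary ({\<beta>\<in>T1. \<delta> < \<beta>} - {\<alpha>. \<exists>\<xi><\<alpha>. \<alpha> \<in> Z \<xi>})"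
    using stationary_Diff[OF stationary_greaterThan[OF T1(2)] nonstationary_diagonal_Union] by blast
  moreover have "stationary {\<alpha>\<in>T0. \<delta> < \<alpha>}" using stationary_greaterThan[OF T0(2)] .
  ultimately obtain \<alpha> \<beta> where "\<alpha> \<in> T0" "\<delta> < \<alpha>" "\<beta> \<in> {\<beta>\<in>T1. \<delta> < \<beta>} - {\<alpha>. \<exists>\<xi><\<alpha>. \<alpha> \<in> Z \<xi>}"
    "\<alpha> < \<beta>" "traces \<delta> \<alpha> \<inter> traces \<delta> \<beta> \<noteq> {}"
    using no_trace_disjoint_pair[of "{\<alpha>\<in>T0. \<delta> < \<alpha>}" \<delta> "{\<beta>\<in>T1. \<delta> < \<beta>} - {\<alpha>. \<exists>\<xi><\<alpha>. \<alpha> \<in> Z \<xi>}"]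
      T0(1) T1(1) TS by blast
  then show False unfolding Z_def by auto
qed

lemma popular_traces_trap: "T1 \<subseteq> T \<Longrightarrow> stationary T1 \<Longrightarrow> traps \<delta> (popular_traces \<delta> T1)"
  unfolding traps_def using exists_popular_trace[of "{\<alpha>\<in>T. \<delta> < \<alpha> \<and> traces \<delta> \<alpha> \<inter> popular_traces \<delta> T1 = {}}"]
  by blast

lemma traps_mono: "traps \<delta> Y \<Longrightarrow> Y \<subseteq> Y' \<Longrightarrow> traps \<delta> Y'"
  unfolding traps_def by (erule nonstationary_subset) blast

text \<open>Among stationary \<open>T\<^sub>1 \<subseteq> T\<close> together with a set \<open>X\<close> of traces common to all of \<open>T\<^sub>1\<close>, pick
  one with \<open>|X|\<close> maximal (\<open>|X| \<le> n\<close>). Every popular trace of \<open>T\<^sub>1\<close> is then already in \<open>X\<close>,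
  since shrinking \<open>T\<^sub>1\<close> to the ordinals having it would enlarge \<open>X\<close>; so \<open>X\<close> is a trap.\<close>

lemma small_trap_exists: "\<exists>Y. finite Y \<and> card Y \<le> n \<and> traps \<delta> Y"
proof -
  define P where "P = {(T1, X). T1 \<subseteq> T \<and> stationary T1 \<and> T1 \<subseteq> {\<alpha>. \<delta> < \<alpha>} \<and> (\<forall>\<alpha>\<in>T1. X \<subseteq> traces \<delta> \<alpha>)}"
  have bnd: "finite X \<and> card X \<le> n" if TX: "(T1, X) \<in> P" for T1 X
  proof -
    obtain \<alpha> where "\<alpha> \<in> T1" using TX stationary_nonempty unfolding P_def by blast
    then have X: "X \<subseteq> traces \<delta> \<alpha>" "\<alpha> \<in> T" using TX unfolding P_def by blast+
    then show ?thesis using finite_subset[OF X(1) finite_traces] card_mono[OF finite_traces X(1)]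
        card_traces_le[OF X(2), of \<delta>] by linarith
  qed
  define K where "K = (\<lambda>p. card (snd p)) ` P"
  have "K \<subseteq> {0..n}" unfolding K_def using bnd by auto
  then have finK: "finite K" using finite_subset by blast
  have "({\<alpha>\<in>T. \<delta> < \<alpha>}, {}) \<in> P" unfolding P_def using stationary_greaterThan[OF Tst] by auto
  then have "Max K \<in> K" using finK unfolding K_def by (metis Max_in empty_iff image_eqI)
  then obtain T1 X where p: "(T1, X) \<in> P" "card X = Max K" unfolding K_def by auto
  have "popular_traces \<delta> T1 \<subseteq> X"
  proof
    fix y assume y: "y \<in> popular_traces \<delta> T1"
    show "y \<in> X"
    proof (rule ccontr)
      assume "y \<notin> X"
      have "({\<beta>\<in>T1. y \<in> traces \<delta> \<beta>}, insert y X) \<in> P"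
        using y p(1) unfolding P_def popular_traces_def by auto
      then have "card (insert y X) \<in> K" unfolding K_def by force
      then have "card (insert y X) \<le> Max K" using finK by simp
      then show False using \<open>y \<notin> X\<close> bnd[OF p(1)] p(2) by simp
    qed
  qed
  then have "traps \<delta> X" using p(1) popular_traces_trap traps_mono unfolding P_def by blast
  then show ?thesis using bnd[OF p(1)] by blast
qed

lemma min_trap_card_attained: "\<exists>Y. finite Y \<and> card Y = min_trap_card \<delta> \<and> traps \<delta> Y"
proof -
  have "\<exists>k Y. finite Y \<and> card Y = k \<and> traps \<delta> Y" using small_trap_exists by blast
  then show ?thesis unfolding min_trap_card_def by (rule LeastI_ex)
qed

lemma min_trap_card_le: "finite Y \<Longrightarrow> traps \<delta> Y \<Longrightarrow> min_trap_card \<delta> \<le> card Y"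
  unfolding min_trap_card_def by (rule Least_le) blast

lemma min_trap_card_le_bound: "min_trap_card \<delta> \<le> n"
  using small_trap_exists min_trap_card_le le_trans by blast

lemma traps_restrict:
  assumes "\<delta> \<le> \<delta>'" and "traps \<delta>' Y"
  shows "traps \<delta> (restrict_family \<delta> Y)"
proof -
  have "{\<alpha>\<in>T. \<delta> < \<alpha> \<and> traces \<delta> \<alpha> \<inter> restrict_family \<delta> Y = {}}
      \<subseteq> {\<alpha>\<in>T. \<delta>' < \<alpha> \<and> traces \<delta>' \<alpha> \<inter> Y = {}} \<union> {\<alpha>. \<alpha> \<le> \<delta>'}"
    using traces_restrict[OF assms(1)] unfolding restrict_family_def by fastforce
  moreover have "\<not> stationary ({\<alpha>\<in>T. \<delta>' < \<alpha> \<and> traces \<delta>' \<alpha> \<inter> Y = {}} \<union> {\<alpha>. \<alpha> \<le> \<delta>'})"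
    using nonstationary_Un assms(2) nonstationary_atMost unfolding traps_def by blast
  ultimately show ?thesis unfolding traps_def using nonstationary_subset by blast
qed

lemma min_trap_card_mono: "\<delta> \<le> \<delta>' \<Longrightarrow> min_trap_card \<delta> \<le> min_trap_card \<delta>'"
proof -
  assume "\<delta> \<le> \<delta>'"
  obtain Y where Y: "finite Y" "card Y = min_trap_card \<delta>'" "traps \<delta>' Y"
    using min_trap_card_attained by blast
  have "min_trap_card \<delta> \<le> card (restrict_family \<delta> Y)"
    using min_trap_card_le finite_restrict_family[OF Y(1)] traps_restrict[OF \<open>\<delta> \<le> \<delta>'\<close> Y(3)] by blast
  also have "\<dots> \<le> card Y" using card_restrict_family_le[OF Y(1)] .
  finally show ?thesis using Y(2) by simp
qed

lemma min_trap_card_eventually_const: "\<exists>\<delta>1. \<forall>\<delta>. \<delta>1 \<le> \<delta> \<longrightarrow> min_trap_card \<delta> = min_trap_card \<delta>1"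
proof -
  have "range min_trap_card \<subseteq> {0..n}" using min_trap_card_le_bound by auto
  then have fin: "finite (range min_trap_card)" using finite_subset by blast
  obtain \<delta>1 where d1: "min_trap_card \<delta>1 = Max (range min_trap_card)"
    using Max_in[OF fin] by auto
  have "min_trap_card \<delta> = min_trap_card \<delta>1" if "\<delta>1 \<le> \<delta>" for \<delta>
    using min_trap_card_mono[OF that] Max_ge[OF fin, of "min_trap_card \<delta>"] d1 by simp
  then show ?thesis by blast
qed

section \<open>Minimal traps\<close>

context
  fixes \<delta>1 :: 'a and m0 :: nat
  assumes min_card_const: "\<forall>\<delta>. \<delta>1 \<le> \<delta> \<longrightarrow> min_trap_card \<delta> = m0"
begin

definition min_traps :: "'a \<Rightarrow> 'a set set set" where
  "min_traps \<delta> = {Y. finite Y \<and> card Y = m0 \<and> traps \<delta> Y}"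

definition restricted_traps :: "'a \<Rightarrow> 'a \<Rightarrow> 'a set set set" where
  "restricted_traps \<rho> \<delta> = restrict_family \<delta> ` min_traps \<rho>"

definition stable_traps :: "'a \<Rightarrow> 'a set set set" where
  "stable_traps \<delta> = (\<Inter>\<rho>\<in>{\<rho>. \<delta> \<le> \<rho>}. restricted_traps \<rho> \<delta>)"

lemma min_trap_critical:
  assumes "\<delta>1 \<le> \<delta>" and Y: "Y \<in> min_traps \<delta>" and "y \<in> Y"
  shows "stationary {\<alpha>\<in>T. \<delta> < \<alpha> \<and> traces \<delta> \<alpha> \<inter> Y = {y}}"
proof -
  have Yp: "finite Y" "card Y = m0" "traps \<delta> Y" using Y unfolding min_traps_def by blast+
  have "\<not> traps \<delta> (Y - {y})"
  proof
    assume "traps \<delta> (Y - {y})"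
    then have "min_trap_card \<delta> \<le> card (Y - {y})" using min_trap_card_le Yp(1) by blast
    moreover have "card (Y - {y}) < card Y" using Yp(1) \<open>y \<in> Y\<close> by (rule card_Diff1_less)
    ultimately show False using min_card_const \<open>\<delta>1 \<le> \<delta>\<close> Yp(2) by simp
  qed
  then have "stationary ({\<alpha>\<in>T. \<delta> < \<alpha> \<and> traces \<delta> \<alpha> \<inter> (Y - {y}) = {}}
      - {\<alpha>\<in>T. \<delta> < \<alpha> \<and> traces \<delta> \<alpha> \<inter> Y = {}})"
    using stationary_Diff Yp(3) unfolding traps_def by blast
  then show ?thesis by (rule stationary_mono) blast
qed

lemma min_trap_member_below:
  assumes "\<delta>1 \<le> \<delta>" "Y \<in> min_traps \<delta>" "y \<in> Y"
  shows "y \<subseteq> {x. x < \<delta>}"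
proof -
  obtain \<alpha> where "y \<in> traces \<delta> \<alpha>"
    using stationary_nonempty[OF min_trap_critical[OF assms]] by blast
  then show ?thesis unfolding traces_def by blast
qed

text \<open>Distinct minimal traps are distinct critical transversals of the traces of the
  \<open>\<alpha> \<in> T\<close> that lie in all of them, by criticality of their members.\<close>

lemma card_min_traps_subset_le:
  assumes "\<delta>1 \<le> \<delta>" and \<Y>: "\<Y> \<subseteq> min_traps \<delta>" "finite \<Y>"
  shows "card \<Y> \<le> n ^ m0"
proof -
  define Bad where "Bad = (\<Union>Y\<in>\<Y>. {\<alpha>\<in>T. \<delta> < \<alpha> \<and> traces \<delta> \<alpha> \<inter> Y = {}})"
  have "\<forall>Y\<in>\<Y>. \<not> stationary {\<alpha>\<in>T. \<delta> < \<alpha> \<and> traces \<delta> \<alpha> \<inter> Y = {}}"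
    using \<Y>(1) unfolding min_traps_def traps_def by blast
  then have nsBad: "\<not> stationary Bad" unfolding Bad_def by (rule nonstationary_finite_UN[OF \<Y>(2)])
  define E where "E = traces \<delta> ` ({\<alpha>\<in>T. \<delta> < \<alpha>} - Bad)"
  have "\<forall>e\<in>E. finite e \<and> card e \<le> n"
  proof
    fix e assume "e \<in> E"
    then obtain \<alpha> where "\<alpha> \<in> T" "e = traces \<delta> \<alpha>" unfolding E_def by blast
    then show "finite e \<and> card e \<le> n" using finite_traces card_traces_le by simp
  qed
  then have bound: "finite (critical_transversals m0 E) \<and> card (critical_transversals m0 E) \<le> n ^ m0"
    using trace_bound_pos by (rule critical_transversals_finite_card)
  have "\<Y> \<subseteq> critical_transversals m0 E"
  proof
    fix Y assume Y: "Y \<in> \<Y>"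
    then have YM: "Y \<in> min_traps \<delta>" using \<Y>(1) by blast
    have "\<exists>e\<in>E. e \<inter> Y = {y}" if y: "y \<in> Y" for y
    proof -
      obtain \<alpha> where "\<alpha> \<in> {\<alpha>\<in>T. \<delta> < \<alpha> \<and> traces \<delta> \<alpha> \<inter> Y = {y}} - Bad"
        using stationary_nonempty[OF stationary_Diff[OF min_trap_critical[OF assms(1) YM y] nsBad]]
        by blast
      then show ?thesis unfolding E_def by blast
    qed
    moreover have "\<forall>e\<in>E. e \<inter> Y \<noteq> {}"
    proof
      fix e assume "e \<in> E"
      then obtain \<alpha> where "\<alpha> \<in> T" "\<delta> < \<alpha>" "\<alpha> \<notin> Bad" "e = traces \<delta> \<alpha>" unfolding E_def by blast
      then show "e \<inter> Y \<noteq> {}" unfolding Bad_def using Y by blast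
    qed
    ultimately show "Y \<in> critical_transversals m0 E"
      using YM unfolding critical_transversals_def min_traps_def by simp
  qed
  then have "card \<Y> \<le> card (critical_transversals m0 E)" using bound card_mono by blast
  then show ?thesis using bound by linarith
qed

lemma finite_min_traps:
  assumes "\<delta>1 \<le> \<delta>"
  shows "finite (min_traps \<delta>)"
proof (rule ccontr)
  assume "infinite (min_traps \<delta>)"
  then obtain \<Y> where "\<Y> \<subseteq> min_traps \<delta>" "finite \<Y>" "card \<Y> = Suc (n ^ m0)"
    using infinite_arbitrarily_large by blast
  moreover have "card \<Y> \<le> n ^ m0" using card_min_traps_subset_le[OF assms] calculation(1,2) .
  ultimately show False by simp
qed

lemma card_min_traps_le: "\<delta>1 \<le> \<delta> \<Longrightarrow> card (min_traps \<delta>) \<le> n ^ m0"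
  using card_min_traps_subset_le[OF _ subset_refl finite_min_traps] .

lemma min_traps_nonempty: "\<delta>1 \<le> \<delta> \<Longrightarrow> min_traps \<delta> \<noteq> {}"
  using min_trap_card_attained[of \<delta>] min_card_const unfolding min_traps_def by auto

lemma restrict_min_trap:
  assumes "\<delta>1 \<le> \<delta>" "\<delta> \<le> \<delta>'" "Y \<in> min_traps \<delta>'"
  shows "restrict_family \<delta> Y \<in> min_traps \<delta>"
proof -
  have Y: "finite Y" "card Y = m0" "traps \<delta>' Y" using assms(3) unfolding min_traps_def by blast+
  have h: "traps \<delta> (restrict_family \<delta> Y)" using traps_restrict[OF assms(2) Y(3)] .
  have f: "finite (restrict_family \<delta> Y)" using finite_restrict_family[OF Y(1)] .
  have "m0 \<le> card (restrict_family \<delta> Y)" using min_trap_card_le[OF f h] min_card_const assms(1) by simp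
  moreover have "card (restrict_family \<delta> Y) \<le> m0" using card_restrict_family_le[OF Y(1)] Y(2) by simp
  ultimately show ?thesis unfolding min_traps_def using h f by simp
qed

lemma restricted_traps_subset: "\<delta>1 \<le> \<delta> \<Longrightarrow> \<delta> \<le> \<rho> \<Longrightarrow> restricted_traps \<rho> \<delta> \<subseteq> min_traps \<delta>"
  unfolding restricted_traps_def using restrict_min_trap by blast

lemma finite_restricted_traps: "\<delta>1 \<le> \<delta> \<Longrightarrow> \<delta> \<le> \<rho> \<Longrightarrow> finite (restricted_traps \<rho> \<delta>)"
  using restricted_traps_subset finite_min_traps finite_subset by blast

lemma restricted_traps_antimono:
  assumes "\<delta>1 \<le> \<delta>" "\<delta> \<le> \<rho>" "\<rho> \<le> \<rho>'"
  shows "restricted_traps \<rho>' \<delta> \<subseteq> restricted_traps \<rho> \<delta>"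
proof
  fix Z assume "Z \<in> restricted_traps \<rho>' \<delta>"
  then obtain Y where Y: "Y \<in> min_traps \<rho>'" "Z = restrict_family \<delta> Y"
    unfolding restricted_traps_def by blast
  have "restrict_family \<rho> Y \<in> min_traps \<rho>"
    using restrict_min_trap[OF order_trans[OF assms(1,2)] assms(3) Y(1)] .
  moreover have "Z = restrict_family \<delta> (restrict_family \<rho> Y)"
    using Y(2) restrict_family_restrict_family[OF assms(2)] by simp
  ultimately show "Z \<in> restricted_traps \<rho> \<delta>" unfolding restricted_traps_def by blast
qed

text \<open>A decreasing sequence of finite sets stabilises: take \<open>\<rho>\<^sub>0\<close> minimising the cardinality.\<close>

lemma restricted_traps_eventually_stable:
  assumes "\<delta>1 \<le> \<delta>"
  shows "\<exists>\<rho>0. \<delta> \<le> \<rho>0 \<and> (\<forall>\<rho>. \<rho>0 \<le> \<rho> \<longrightarrow> restricted_traps \<rho> \<delta> = stable_traps \<delta>)"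
proof -
  define c where "c = (LEAST c. \<exists>\<rho>. \<delta> \<le> \<rho> \<and> card (restricted_traps \<rho> \<delta>) = c)"
  have "\<exists>\<rho>. \<delta> \<le> \<rho> \<and> card (restricted_traps \<rho> \<delta>) = c" unfolding c_def by (rule LeastI_ex) blast
  then obtain \<rho>0 where r0: "\<delta> \<le> \<rho>0" "card (restricted_traps \<rho>0 \<delta>) = c" by blast
  have eq: "restricted_traps \<rho> \<delta> = restricted_traps \<rho>0 \<delta>" if "\<rho>0 \<le> \<rho>" for \<rho>
  proof (rule card_subset_eq)
    show fin: "finite (restricted_traps \<rho>0 \<delta>)" using finite_restricted_traps[OF assms r0(1)] .
    show sub: "restricted_traps \<rho> \<delta> \<subseteq> restricted_traps \<rho>0 \<delta>"
      using restricted_traps_antimono[OF assms r0(1) that] .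
    have "c \<le> card (restricted_traps \<rho> \<delta>)"
      unfolding c_def using order_trans[OF r0(1) that] by (intro Least_le) blast
    then show "card (restricted_traps \<rho> \<delta>) = card (restricted_traps \<rho>0 \<delta>)"
      using card_mono[OF fin sub] r0(2) by simp
  qed
  have "stable_traps \<delta> = restricted_traps \<rho>0 \<delta>"
  proof
    show "stable_traps \<delta> \<subseteq> restricted_traps \<rho>0 \<delta>"
      unfolding stable_traps_def using r0(1) by blast
    show "restricted_traps \<rho>0 \<delta> \<subseteq> stable_traps \<delta>" unfolding stable_traps_def
    proof (intro INT_greatest)
      fix \<rho> assume "\<rho> \<in> {\<rho>. \<delta> \<le> \<rho>}"
      show "restricted_traps \<rho>0 \<delta> \<subseteq> restricted_traps \<rho> \<delta>"
      proof (cases "\<rho>0 \<le> \<rho>")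
        case True
        then show ?thesis using eq by blast
      next
        case False
        then show ?thesis using restricted_traps_antimono[OF assms] \<open>\<rho> \<in> {\<rho>. \<delta> \<le> \<rho>}\<close> by simp
      qed
    qed
  qed
  then show ?thesis using eq r0(1) by metis
qed

lemma restrict_stable_traps:
  assumes "\<delta>1 \<le> \<delta>" "\<delta> \<le> \<delta>'"
  shows "restrict_family \<delta> ` stable_traps \<delta>' = stable_traps \<delta>"
proof -
  obtain \<rho>1 where r1: "\<forall>\<rho>. \<rho>1 \<le> \<rho> \<longrightarrow> restricted_traps \<rho> \<delta> = stable_traps \<delta>"
    using restricted_traps_eventually_stable[OF assms(1)] by blast
  obtain \<rho>2 where r2: "\<forall>\<rho>. \<rho>2 \<le> \<rho> \<longrightarrow> restricted_traps \<rho> \<delta>' = stable_traps \<delta>'"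
    using restricted_traps_eventually_stable[OF order_trans[OF assms]] by blast
  have "restrict_family \<delta> ` restricted_traps (max \<rho>1 \<rho>2) \<delta>' = restricted_traps (max \<rho>1 \<rho>2) \<delta>"
    unfolding restricted_traps_def image_image restrict_family_restrict_family[OF assms(2)] ..
  then show ?thesis using r1 r2 by simp
qed

lemma stable_traps_subset:
  assumes "\<delta>1 \<le> \<delta>"
  shows "stable_traps \<delta> \<subseteq> min_traps \<delta>"
proof -
  obtain \<rho>0 where "\<delta> \<le> \<rho>0" "restricted_traps \<rho>0 \<delta> = stable_traps \<delta>"
    using restricted_traps_eventually_stable[OF assms] by blast
  then show ?thesis using restricted_traps_subset[OF assms] by blast
qed

lemma finite_stable_traps: "\<delta>1 \<le> \<delta> \<Longrightarrow> finite (stable_traps \<delta>)"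
  using stable_traps_subset finite_min_traps finite_subset by blast

lemma stable_traps_nonempty: "\<delta>1 \<le> \<delta> \<Longrightarrow> stable_traps \<delta> \<noteq> {}"
proof -
  assume "\<delta>1 \<le> \<delta>"
  then obtain \<rho>0 where "\<delta> \<le> \<rho>0" "restricted_traps \<rho>0 \<delta> = stable_traps \<delta>"
    using restricted_traps_eventually_stable by blast
  then show ?thesis using min_traps_nonempty[OF order_trans[OF \<open>\<delta>1 \<le> \<delta>\<close>]]
    unfolding restricted_traps_def by auto
qed

lemma card_stable_traps_eventually_const:
  "\<exists>\<delta>2. \<delta>1 \<le> \<delta>2 \<and> (\<forall>\<delta>. \<delta>2 \<le> \<delta> \<longrightarrow> card (stable_traps \<delta>) = card (stable_traps \<delta>2))"
proof -
  define K where "K = (\<lambda>\<delta>. card (stable_traps \<delta>)) ` {\<delta>. \<delta>1 \<le> \<delta>}"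
  have "card (stable_traps \<delta>) \<le> n ^ m0" if "\<delta>1 \<le> \<delta>" for \<delta>
    using card_mono[OF finite_min_traps stable_traps_subset] card_min_traps_le that le_trans by blast
  then have "K \<subseteq> {0..n ^ m0}" unfolding K_def by auto
  then have fin: "finite K" using finite_subset by blast
  have "K \<noteq> {}" unfolding K_def by blast
  then obtain \<delta>2 where d2: "\<delta>1 \<le> \<delta>2" "card (stable_traps \<delta>2) = Max K"
    using Max_in[OF fin] unfolding K_def by auto
  have "card (stable_traps \<delta>) = card (stable_traps \<delta>2)" if "\<delta>2 \<le> \<delta>" for \<delta>
  proof -
    have d1d: "\<delta>1 \<le> \<delta>" using d2(1) that by (rule order_trans)
    have "card (stable_traps \<delta>2) = card (restrict_family \<delta>2 ` stable_traps \<delta>)"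
      using restrict_stable_traps[OF d2(1) that] by simp
    also have "\<dots> \<le> card (stable_traps \<delta>)" using card_image_le finite_stable_traps[OF d1d] by blast
    finally show ?thesis using Max_ge[OF fin] d2(2) d1d unfolding K_def by fastforce
  qed
  then show ?thesis using d2(1) by blast
qed

section \<open>A coherent branch of minimal traps\<close>

context
  fixes \<delta>2 :: 'a and Y0 :: "'a set set"
  assumes d12: "\<delta>1 \<le> \<delta>2"
    and card_const: "\<forall>\<delta>. \<delta>2 \<le> \<delta> \<longrightarrow> card (stable_traps \<delta>) = card (stable_traps \<delta>2)"
    and Y0: "Y0 \<in> stable_traps \<delta>2"
begin

definition branch :: "'a \<Rightarrow> 'a set set" where
  "branch \<delta> = (THE Y. Y \<in> stable_traps \<delta> \<and> restrict_family \<delta>2 Y = Y0)"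

definition strand :: "'a set \<Rightarrow> 'a \<Rightarrow> 'a set" where
  "strand z \<delta> = (THE y. y \<in> branch \<delta> \<and> y \<inter> {x. x < \<delta>2} = z)"

definition strand_union :: "'a set \<Rightarrow> 'a set" where
  "strand_union z = {\<eta>. \<exists>\<delta>. \<delta>2 \<le> \<delta> \<and> \<eta> < \<delta> \<and> \<eta> \<in> strand z \<delta>}"

lemma d1_le: "\<delta>2 \<le> \<delta> \<Longrightarrow> \<delta>1 \<le> \<delta>"
  using d12 by (rule order_trans)

lemma inj_on_restrict_stable_traps:
  assumes "\<delta>2 \<le> \<delta>" "\<delta> \<le> \<delta>'"
  shows "inj_on (restrict_family \<delta>) (stable_traps \<delta>')"
proof (rule eq_card_imp_inj_on)
  have d': "\<delta>2 \<le> \<delta>'" using assms by (rule order_trans)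
  then show "finite (stable_traps \<delta>')" using finite_stable_traps[OF d1_le] by blast
  have "card (restrict_family \<delta> ` stable_traps \<delta>') = card (stable_traps \<delta>)"
    using restrict_stable_traps[OF d1_le[OF assms(1)] assms(2)] by simp
  also have "\<dots> = card (stable_traps \<delta>')"
    using card_const[rule_format, OF assms(1)] card_const[rule_format, OF d'] by simp
  finally show "card (restrict_family \<delta> ` stable_traps \<delta>') = card (stable_traps \<delta>')" .
qed

lemma branch_unique:
  assumes "\<delta>2 \<le> \<delta>" "Y \<in> stable_traps \<delta>" "restrict_family \<delta>2 Y = Y0"
  shows "branch \<delta> = Y"
  unfolding branch_def
proof (rule the_equality)
  show "Y \<in> stable_traps \<delta> \<and> restrict_family \<delta>2 Y = Y0" using assms(2,3) by blast
  fix Y' assume "Y' \<in> stable_traps \<delta> \<and> restrict_family \<delta>2 Y' = Y0"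
  then show "Y' = Y" using inj_on_restrict_stable_traps[OF order_refl assms(1)] assms(2,3)
    unfolding inj_on_def by blast
qed

lemma branch_stable:
  assumes "\<delta>2 \<le> \<delta>"
  shows "branch \<delta> \<in> stable_traps \<delta>" and "restrict_family \<delta>2 (branch \<delta>) = Y0"
proof -
  have "Y0 \<in> restrict_family \<delta>2 ` stable_traps \<delta>" using Y0 restrict_stable_traps[OF d12 assms] by simp
  then obtain Y where "Y \<in> stable_traps \<delta>" "restrict_family \<delta>2 Y = Y0" by blast
  then show "branch \<delta> \<in> stable_traps \<delta>" "restrict_family \<delta>2 (branch \<delta>) = Y0"
    using branch_unique[OF assms] by simp_all
qed

lemma restrict_branch:
  assumes "\<delta>2 \<le> \<delta>" "\<delta> \<le> \<delta>'"
  shows "restrict_family \<delta> (branch \<delta>') = branch \<delta>"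
proof (rule branch_unique[OF assms(1), symmetric])
  have "\<delta>2 \<le> \<delta>'" using assms by (rule order_trans)
  then show "restrict_family \<delta> (branch \<delta>') \<in> stable_traps \<delta>"
    using branch_stable(1) restrict_stable_traps[OF d1_le[OF assms(1)] assms(2)] by blast
  show "restrict_family \<delta>2 (restrict_family \<delta> (branch \<delta>')) = Y0"
    using restrict_family_restrict_family[OF assms(1)] branch_stable(2) \<open>\<delta>2 \<le> \<delta>'\<close> by simp
qed

lemma branch_min_trap: "\<delta>2 \<le> \<delta> \<Longrightarrow> branch \<delta> \<in> min_traps \<delta>"
  using branch_stable(1) stable_traps_subset[OF d1_le] by blast

lemma Y0_min_trap: "Y0 \<in> min_traps \<delta>2"
  using Y0 stable_traps_subset[OF d12] by blast

lemma inj_on_restrict_branch: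
  assumes "\<delta>2 \<le> \<delta>"
  shows "inj_on (\<lambda>y. y \<inter> {x. x < \<delta>2}) (branch \<delta>)"
proof (rule eq_card_imp_inj_on)
  have B: "finite (branch \<delta>)" "card (branch \<delta>) = m0"
    using branch_min_trap[OF assms] unfolding min_traps_def by blast+
  then show "finite (branch \<delta>)" by blast
  have "(\<lambda>y. y \<inter> {x. x < \<delta>2}) ` branch \<delta> = Y0"
    using branch_stable(2)[OF assms] unfolding restrict_family_def .
  then show "card ((\<lambda>y. y \<inter> {x. x < \<delta>2}) ` branch \<delta>) = card (branch \<delta>)"
    using Y0_min_trap B(2) unfolding min_traps_def by simp
qed

lemma strand_unique:
  assumes "\<delta>2 \<le> \<delta>" "y \<in> branch \<delta>" "y \<inter> {x. x < \<delta>2} = z"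
  shows "strand z \<delta> = y"
  unfolding strand_def
proof (rule the_equality)
  show "y \<in> branch \<delta> \<and> y \<inter> {x. x < \<delta>2} = z" using assms(2,3) by blast
  fix y' assume "y' \<in> branch \<delta> \<and> y' \<inter> {x. x < \<delta>2} = z"
  then show "y' = y" using inj_on_restrict_branch[OF assms(1)] assms(2,3) unfolding inj_on_def by blast
qed

lemma strand_in_branch:
  assumes "\<delta>2 \<le> \<delta>" "z \<in> Y0"
  shows "strand z \<delta> \<in> branch \<delta>" and "strand z \<delta> \<inter> {x. x < \<delta>2} = z"
proof -
  obtain y where "y \<in> branch \<delta>" "z = y \<inter> {x. x < \<delta>2}"
    using branch_stable(2)[OF assms(1)] assms(2) unfolding restrict_family_def by blast
  then show "strand z \<delta> \<in> branch \<delta>" "strand z \<delta> \<inter> {x. x < \<delta>2} = z"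
    using strand_unique[OF assms(1)] by simp_all
qed

lemma restrict_strand:
  assumes "\<delta>2 \<le> \<delta>" "\<delta> \<le> \<delta>'" "z \<in> Y0"
  shows "strand z \<delta>' \<inter> {x. x < \<delta>} = strand z \<delta>"
proof (rule strand_unique[OF assms(1), symmetric])
  have d': "\<delta>2 \<le> \<delta>'" using assms(1,2) by (rule order_trans)
  have "strand z \<delta>' \<inter> {x. x < \<delta>} \<in> restrict_family \<delta> (branch \<delta>')"
    unfolding restrict_family_def using strand_in_branch(1)[OF d' assms(3)] by blast
  then show "strand z \<delta>' \<inter> {x. x < \<delta>} \<in> branch \<delta>" using restrict_branch[OF assms(1,2)] by simp
  show "strand z \<delta>' \<inter> {x. x < \<delta>} \<inter> {x. x < \<delta>2} = z"
    using strand_in_branch(2)[OF d' assms(3)] assms(1) by (auto dest: less_le_trans)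
qed

lemma strand_union_restrict:
  assumes "\<delta>2 \<le> \<delta>" "z \<in> Y0"
  shows "strand_union z \<inter> {x. x < \<delta>} = strand z \<delta>"
proof
  have "strand z \<delta> \<subseteq> {x. x < \<delta>}"
    using min_trap_member_below[OF d1_le[OF assms(1)] branch_min_trap[OF assms(1)]]
      strand_in_branch(1)[OF assms] by blast
  then show "strand z \<delta> \<subseteq> strand_union z \<inter> {x. x < \<delta>}"
    unfolding strand_union_def using assms(1) by blast
  show "strand_union z \<inter> {x. x < \<delta>} \<subseteq> strand z \<delta>"
  proof
    fix \<eta> assume "\<eta> \<in> strand_union z \<inter> {x. x < \<delta>}"
    then obtain \<delta>' where d': "\<delta>2 \<le> \<delta>'" "\<eta> < \<delta>'" "\<eta> \<in> strand z \<delta>'" and "\<eta> < \<delta>"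
      unfolding strand_union_def by blast
    show "\<eta> \<in> strand z \<delta>"
    proof (cases "\<delta>' \<le> \<delta>")
      case True
      then show ?thesis using restrict_strand[OF d'(1) True assms(2)] d'(3) by blast
    next
      case False
      then have "strand z \<delta>' \<inter> {x. x < \<delta>} = strand z \<delta>"
        using restrict_strand[OF assms(1) _ assms(2)] by simp
      then show ?thesis using d'(3) \<open>\<eta> < \<delta>\<close> by blast
    qed
  qed
qed

text \<open>Each trace of \<open>\<alpha>\<close> meets \<open>branch \<delta>\<close> for all \<open>\<delta> \<in> [\<delta>\<^sub>2, \<alpha>)\<close>; as \<open>\<C> \<alpha>\<close> is finite, a single
  \<open>D \<in> \<C> \<alpha>\<close> does so cofinally often, hence (by coherence of the branch) for all such \<open>\<delta>\<close>.\<close>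

lemma coherent_member_follows_branch:
  assumes a2: "\<delta>2 < \<alpha>"
    and meets: "\<forall>\<delta>. \<delta>2 \<le> \<delta> \<and> \<delta> < \<alpha> \<longrightarrow> traces \<delta> \<alpha> \<inter> branch \<delta> \<noteq> {}"
  shows "\<exists>D\<in>\<C> \<alpha>. \<forall>\<delta>. \<delta>2 \<le> \<delta> \<and> \<delta> < \<alpha> \<longrightarrow> D \<inter> {x. x < \<delta>} \<in> branch \<delta>"
proof -
  have "\<forall>\<delta>. \<delta>2 \<le> \<delta> \<and> \<delta> < \<alpha> \<longrightarrow> (\<exists>D\<in>\<C> \<alpha>. D \<inter> {x. x < \<delta>} \<in> branch \<delta>)"
    using meets unfolding traces_def by blast
  then obtain D where D: "D \<in> \<C> \<alpha>"
    and cof: "\<forall>\<delta>'. \<delta>2 \<le> \<delta>' \<and> \<delta>' < \<alpha> \<longrightarrow> (\<exists>\<delta>. \<delta>' \<le> \<delta> \<and> \<delta> < \<alpha> \<and> D \<inter> {x. x < \<delta>} \<in> branch \<delta>)"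
    using finite_cofinal_choice[OF coherent_finite[OF coh] a2, where P = "\<lambda>D \<delta>. D \<inter> {x. x < \<delta>} \<in> branch \<delta>"]
    by blast
  have "D \<inter> {x. x < \<delta>} \<in> branch \<delta>" if d: "\<delta>2 \<le> \<delta>" "\<delta> < \<alpha>" for \<delta>
  proof -
    obtain \<delta>' where d': "\<delta> \<le> \<delta>'" "D \<inter> {x. x < \<delta>'} \<in> branch \<delta>'" using cof d by blast
    have "(D \<inter> {x. x < \<delta>'}) \<inter> {x. x < \<delta>} \<in> restrict_family \<delta> (branch \<delta>')"
      unfolding restrict_family_def using d'(2) by blast
    moreover have "(D \<inter> {x. x < \<delta>'}) \<inter> {x. x < \<delta>} = D \<inter> {x. x < \<delta>}"
      using d'(1) by (auto dest: less_le_trans)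
    ultimately show ?thesis using restrict_branch[OF d(1) d'(1)] by simp
  qed
  then show ?thesis using D by blast
qed

lemma coherent_member_is_strand_union:
  assumes aL: "\<alpha> \<in> limit_points" and a2: "\<delta>2 < \<alpha>" and D: "D \<in> \<C> \<alpha>"
    and follows: "\<forall>\<delta>. \<delta>2 \<le> \<delta> \<and> \<delta> < \<alpha> \<longrightarrow> D \<inter> {x. x < \<delta>} \<in> branch \<delta>"
  shows "D \<inter> {x. x < \<delta>2} \<in> Y0" and "D = strand_union (D \<inter> {x. x < \<delta>2}) \<inter> {x. x < \<alpha>}"
proof -
  let ?z = "D \<inter> {x. x < \<delta>2}"
  have "?z \<in> restrict_family \<delta>2 (branch \<delta>2)"
    using follows a2 unfolding restrict_family_def by (auto intro!: image_eqI[of _ _ ?z])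
  then show zY: "?z \<in> Y0" using branch_stable(2)[OF order_refl] by simp
  have strand: "D \<inter> {x. x < \<delta>} = strand_union ?z \<inter> {x. x < \<delta>}" if "\<delta>2 \<le> \<delta>" "\<delta> < \<alpha>" for \<delta>
  proof -
    have "D \<inter> {x. x < \<delta>} \<inter> {x. x < \<delta>2} = ?z" using that(1) by (auto dest: less_le_trans)
    then have "strand ?z \<delta> = D \<inter> {x. x < \<delta>}"
      using strand_unique[OF that(1) follows[rule_format, OF conjI[OF that]]] by simp
    then show ?thesis using strand_union_restrict[OF that(1) zY] by simp
  qed
  have "\<exists>\<delta>. \<delta>2 \<le> \<delta> \<and> \<eta> < \<delta> \<and> \<delta> < \<alpha>" if "\<eta> < \<alpha>" for \<eta>
  proof -
    have "max \<eta> \<delta>2 < \<alpha>" using that a2 by simp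
    then obtain \<delta> where "max \<eta> \<delta>2 < \<delta>" "\<delta> < \<alpha>" using aL unfolding limit_points_def by blast
    then show ?thesis by (auto intro: less_imp_le)
  qed
  moreover have "D \<subseteq> {x. x < \<alpha>}" using coherent_club_below[OF coh D] unfolding club_below_def by blast
  ultimately show "D = strand_union ?z \<inter> {x. x < \<alpha>}" using strand by blast
qed

lemma strand_union_coherent_at:
  assumes aL: "\<alpha> \<in> limit_points" and a2: "\<delta>2 < \<alpha>"
    and meets: "\<forall>\<delta>. \<delta>2 \<le> \<delta> \<and> \<delta> < \<alpha> \<longrightarrow> traces \<delta> \<alpha> \<inter> branch \<delta> \<noteq> {}"
  shows "\<exists>z\<in>Y0. strand_union z \<inter> {x. x < \<alpha>} \<in> \<C> \<alpha>"
proof -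
  obtain D where D: "D \<in> \<C> \<alpha>"
    and follows: "\<forall>\<delta>. \<delta>2 \<le> \<delta> \<and> \<delta> < \<alpha> \<longrightarrow> D \<inter> {x. x < \<delta>} \<in> branch \<delta>"
    using coherent_member_follows_branch[OF a2 meets] by blast
  have z: "D \<inter> {x. x < \<delta>2} \<in> Y0"
    and eq: "D = strand_union (D \<inter> {x. x < \<delta>2}) \<inter> {x. x < \<alpha>}"
    using coherent_member_is_strand_union[OF aL a2 D follows] by blast+
  have "strand_union (D \<inter> {x. x < \<delta>2}) \<inter> {x. x < \<alpha>} \<in> \<C> \<alpha>"
    unfolding eq[symmetric] using D .
  then show ?thesis using z by blast
qed

text \<open>Almost every \<open>\<alpha> \<in> T\<close> has traces in every \<open>branch \<delta>\<close>, \<open>\<delta> < \<alpha>\<close>, since a diagonal union of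
  nonstationary sets is nonstationary; one of the finitely many strand unions is then coherent
  at stationarily many \<open>\<alpha>\<close>, which makes it a thread.\<close>

lemma thread_exists_from_branch: "\<exists>D. is_thread \<C> D"
proof -
  define N where "N \<delta> = (if \<delta>2 \<le> \<delta> then {\<alpha>\<in>T. \<delta> < \<alpha> \<and> traces \<delta> \<alpha> \<inter> branch \<delta> = {}} else {})" for \<delta>
  have nsN: "\<not> stationary (N \<delta>)" for \<delta>
  proof (cases "\<delta>2 \<le> \<delta>")
    case True
    then show ?thesis using branch_min_trap[OF True] unfolding N_def min_traps_def traps_def by simp
  next
    case False
    then have "N \<delta> = {}" unfolding N_def by simp
    then show ?thesis using stationary_nonempty by blast
  qed
  have "stationary (({\<alpha>\<in>T. \<delta>2 < \<alpha>} \<inter> limit_points) - {\<alpha>. \<exists>\<delta><\<alpha>. \<alpha> \<in> N \<delta>})"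
    using stationary_Diff[OF stationary_Int_club[OF stationary_greaterThan[OF Tst] club_limit_points]
        nonstationary_diagonal_Union[of N]] nsN by blast
  moreover have "({\<alpha>\<in>T. \<delta>2 < \<alpha>} \<inter> limit_points) - {\<alpha>. \<exists>\<delta><\<alpha>. \<alpha> \<in> N \<delta>}
      \<subseteq> (\<Union>z\<in>Y0. {\<alpha>. strand_union z \<inter> {x. x < \<alpha>} \<in> \<C> \<alpha>})"
  proof
    fix \<alpha> assume a: "\<alpha> \<in> ({\<alpha>\<in>T. \<delta>2 < \<alpha>} \<inter> limit_points) - {\<alpha>. \<exists>\<delta><\<alpha>. \<alpha> \<in> N \<delta>}"
    have "traces \<delta> \<alpha> \<inter> branch \<delta> \<noteq> {}" if "\<delta>2 \<le> \<delta>" "\<delta> < \<alpha>" for \<delta>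
    proof
      assume "traces \<delta> \<alpha> \<inter> branch \<delta> = {}"
      then have "\<alpha> \<in> N \<delta>" using that a unfolding N_def by simp
      then show False using that(2) a by blast
    qed
    then have "\<forall>\<delta>. \<delta>2 \<le> \<delta> \<and> \<delta> < \<alpha> \<longrightarrow> traces \<delta> \<alpha> \<inter> branch \<delta> \<noteq> {}" by blast
    then show "\<alpha> \<in> (\<Union>z\<in>Y0. {\<alpha>. strand_union z \<inter> {x. x < \<alpha>} \<in> \<C> \<alpha>})"
      using strand_union_coherent_at a by blast
  qed
  ultimately have "stationary (\<Union>z\<in>Y0. {\<alpha>. strand_union z \<inter> {x. x < \<alpha>} \<in> \<C> \<alpha>})"
    by (rule stationary_mono)
  moreover have "finite Y0" using Y0_min_trap unfolding min_traps_def by blast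
  ultimately obtain z where "stationary {\<alpha>. strand_union z \<inter> {x. x < \<alpha>} \<in> \<C> \<alpha>}"
    using nonstationary_finite_UN[of Y0 "\<lambda>z. {\<alpha>. strand_union z \<inter> {x. x < \<alpha>} \<in> \<C> \<alpha>}"] by blast
  then have "is_thread \<C> (strand_union z)"
    by (intro is_thread_if_coherent_on_unbounded[OF coh]) (use stationary_unbounded in blast)+
  then show ?thesis by blast
qed

end

lemma thread_exists_from_min_trap_card: "\<exists>D. is_thread \<C> D"
proof -
  obtain \<delta>2 where "\<delta>1 \<le> \<delta>2" "\<forall>\<delta>. \<delta>2 \<le> \<delta> \<longrightarrow> card (stable_traps \<delta>) = card (stable_traps \<delta>2)"
    using card_stable_traps_eventually_const by blast
  moreover obtain Y0 where "Y0 \<in> stable_traps \<delta>2" using stable_traps_nonempty[OF \<open>\<delta>1 \<le> \<delta>2\<close>] by blast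
  ultimately show ?thesis by (rule thread_exists_from_branch)
qed

end

lemma thread_exists_from_trace_bound: "\<exists>D. is_thread \<C> D"
proof -
  obtain \<delta>1 where "\<forall>\<delta>. \<delta>1 \<le> \<delta> \<longrightarrow> min_trap_card \<delta> = min_trap_card \<delta>1"
    using min_trap_card_eventually_const by blast
  then show ?thesis by (rule thread_exists_from_min_trap_card)
qed

end

lemma Refl_lt_3_imp_thread:
  fixes \<C> :: "'a \<Rightarrow> 'a set set" and S :: "'a set"
  assumes coh: "coherent_seq_fin \<C>" and refl: "Refl_lt 3 S" and S: "stationary S"
  shows "\<exists>D. is_thread \<C> D"
proof -
  have "S = (\<Union>k. {\<alpha>\<in>S. card (\<C> \<alpha>) \<le> k})" by blast
  then obtain n where "stationary {\<alpha>\<in>S. card (\<C> \<alpha>) \<le> n}"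
    using S nonstationary_countable_UN[of "\<lambda>k. {\<alpha>\<in>S. card (\<C> \<alpha>) \<le> k}"] by auto
  then show ?thesis using thread_exists_from_trace_bound[OF coh refl, of "{\<alpha>\<in>S. card (\<C> \<alpha>) \<le> n}" n]
    by blast
qed

end

theorem theorem2p6:
  assumes "regular_uncountable_cardinal_type TYPE('a::wellorder)"
    and "square_fin TYPE('a)"
    and "S \<subseteq> (UNIV :: 'a set)"
    and "stationary S"
  shows "\<not> Refl_lt 3 S"
proof
  assume "Refl_lt 3 S"
  moreover obtain \<C> :: "'a \<Rightarrow> 'a set set" where "coherent_seq_fin \<C>" "\<not> (\<exists>D. is_thread \<C> D)"
    using assms(2) unfolding square_fin_def by blast
  ultimately show False using Refl_lt_3_imp_thread[OF assms(1) _ _ assms(4)] by blast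
qed

end
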